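(* Let $a\in\mathbb{R}$, $w\in\mathbb{C}\setminus\mathbb{R}$ with $\varphi := |\operatorname{Arg}(w)|\in(\pi/2,\pi)$, and $\tau>0$. Then all roots of $z + a - we^{-\tau z} = 0$ have negative real parts if and only if one of the following holds: (i) $a \ge 0$ and $|w| < \frac{1}{\tau}R_2(-\tau a;\varphi)$; (ii) $-\frac{1}{\tau}M(\varphi) < a < 0$ and $\frac{1}{\tau}R_1(-\tau a;\varphi) < |w| < \frac{1}{\tau}R_2(-\tau a;\varphi)$.
   Context: $\operatorname{Arg}(w)\in(-\pi,\pi]$ is the principal argument. For $\varphi\in(\pi/2,\pi)$: $C(\theta;\varphi) := \theta\cot(\theta-\varphi)$ on $[0,\varphi)$; $S(\varphi)\in(0,\varphi)$ is the unique solution of $\sin(2\theta-2\varphi)=2\theta$; $C(\cdot;\varphi)$ is strictly increasing on $[0,S(\varphi)]$ and strictly decreasing on $[S(\varphi),\varphi)$ with maximum $M(\varphi) := \cos^2(S(\varphi)-\varphi)$, $C(0;\varphi)=0$, and $C(\theta;\varphi)\to-\infty$ as $\theta\uparrow\varphi$. $C_1^{-1}(\cdot;\varphi):[0,M(\varphi)]\to[0,S(\varphi)]$ and $C_2^{-1}(\cdot;\varphi):(-\infty,M(\varphi)]\to[S(\varphi),\varphi)$ are the inverses of the restrictions of $C(\cdot;\varphi)$ to $[0,S(\varphi)]$ and $[S(\varphi),\varphi)$. $R_j(r;\varphi) := -C_j^{-1}(r;\varphi)/\sin(C_j^{-1}(r;\varphi)-\varphi)$ for $j=1,2$. *)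

theory Defs
  imports "HOL-Analysis.Analysis"
begin

definition Cfun :: "real \<Rightarrow> real \<Rightarrow> real" where
  "Cfun \<theta> \<phi> = \<theta> * cot (\<theta> - \<phi>)"

definition Sfun :: "real \<Rightarrow> real" where
  "Sfun \<phi> = (THE \<theta>. 0 < \<theta> \<and> \<theta> < \<phi> \<and> sin (2 * \<theta> - 2 * \<phi>) = 2 * \<theta>)"

definition Mfun :: "real \<Rightarrow> real" where
  "Mfun \<phi> = (cos (Sfun \<phi> - \<phi>))\<^sup>2"

definition C1inv :: "real \<Rightarrow> real \<Rightarrow> real" where
  "C1inv r \<phi> = (THE \<theta>. 0 \<le> \<theta> \<and> \<theta> \<le> Sfun \<phi> \<and> Cfun \<theta> \<phi> = r)"

definition C2inv :: "real \<Rightarrow> real \<Rightarrow> real" where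
  "C2inv r \<phi> = (THE \<theta>. Sfun \<phi> \<le> \<theta> \<and> \<theta> < \<phi> \<and> Cfun \<theta> \<phi> = r)"

definition R1 :: "real \<Rightarrow> real \<Rightarrow> real" where
  "R1 r \<phi> = - C1inv r \<phi> / sin (C1inv r \<phi> - \<phi>)"

definition R2 :: "real \<Rightarrow> real \<Rightarrow> real" where
  "R2 r \<phi> = - C2inv r \<phi> / sin (C2inv r \<phi> - \<phi>)"

end

theory Submission
  imports Defs
begin

text \<open>
  Put \<phi> = \<bar>Arg w\<bar>, replacing w by its conjugate if necessary (this conjugates the roots).
  The substitution u = \<tau> (z + a) turns the equation into u e^u = L e^(i \<phi>) with
  L = \<tau> \<bar>w\<bar> e^(\<tau> a), and a root with Re z \<ge> 0 into a solution with Re u \<ge> \<tau> a.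
  Every solution is dominated in real part by one on the principal branch 0 < Im u < \<phi>: moving
  the real part t to the right along the curve (Im u)^2 = L^2 e^(-2 t) - t^2, the argument
  condition changes sign before the curve closes at t e^t = L.
  On the principal branch the solution with Im u = y has Re u = -C(y;\<phi>) and
  L = k(y) = y e^(-C(y;\<phi>)) / sin (\<phi> - y), and k increases strictly from 0 to \<infinity>.
  So some root lies in the closed right half plane iff L \<in> k({y. C(y;\<phi>) \<le> -\<tau> a}).
  Because C(\<cdot>;\<phi>) increases to M(\<phi>) and then decreases to -\<infinity>, this sublevel set consists of at
  most two intervals with endpoints C_j^-1(-\<tau> a;\<phi>), and k(C_j^-1(r;\<phi>)) = R_j(r;\<phi>) e^(-r)
  turns the condition into the stated bounds on \<bar>w\<bar>.
\<close>

section \<open>The function C(\<cdot>;\<phi>) and its inverse branches\<close>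

lemma sin_diff_commute: "sin (a - b) = - sin (b - a)"
  by (metis minus_diff_eq sin_minus)

text \<open>S(\<phi>) is the zero of Sgap \<phi> in (0, \<phi>), and Sgap \<phi> is, up to a negative factor, the
  derivative of C(\<cdot>;\<phi>).\<close>

definition Sgap :: "real \<Rightarrow> real \<Rightarrow> real" where
  "Sgap \<phi> x = 2 * x - sin (2 * x - 2 * \<phi>)"

locale obtuse_angle =
  fixes \<phi> :: real
  assumes gt_half_pi: "pi / 2 < \<phi>" and lt_pi: "\<phi> < pi"
begin

lemma gt_0: "0 < \<phi>"
  using gt_half_pi pi_gt_zero by linarith

lemma sin_pos: "0 < sin \<phi>"
  using gt_0 lt_pi by (intro sin_gt_zero)

lemma sin_diff_pos: "0 \<le> x \<Longrightarrow> x < \<phi> \<Longrightarrow> 0 < sin (\<phi> - x)"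
  using lt_pi by (intro sin_gt_zero) auto

lemma Cfun_eq: "Cfun x \<phi> = - (x * cos (\<phi> - x) / sin (\<phi> - x))"
  using sin_diff_commute[of x \<phi>] cos_minus[of "\<phi> - x"] by (simp add: Cfun_def cot_def)

lemma Sgap_has_derivative: "(Sgap \<phi> has_real_derivative 4 * (sin (\<phi> - x))\<^sup>2) (at x)"
proof -
  have "2 - 2 * cos (2 * x - 2 * \<phi>) = 4 * (sin (\<phi> - x))\<^sup>2"
    using cos_double_sin[of "\<phi> - x"] cos_minus[of "2 * (\<phi> - x)"] by (simp add: algebra_simps)
  then show ?thesis
    unfolding Sgap_def[abs_def] by (auto intro!: derivative_eq_intros)
qed

lemma Sgap_strict_mono:
  assumes "0 \<le> a" "a < b" "b \<le> \<phi>"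
  shows "Sgap \<phi> a < Sgap \<phi> b"
proof (rule DERIV_pos_imp_increasing_open[OF \<open>a < b\<close>])
  fix x assume "a < x" "x < b"
  then have "0 < 4 * (sin (\<phi> - x))\<^sup>2"
    using sin_diff_pos[of x] assms by simp
  then show "\<exists>y. (Sgap \<phi> has_real_derivative y) (at x) \<and> 0 < y"
    using Sgap_has_derivative by blast
qed (simp add: Sgap_def continuous_intros)

lemma Sfun_ex1: "\<exists>!S. 0 < S \<and> S < \<phi> \<and> sin (2 * S - 2 * \<phi>) = 2 * S"
proof -
  have "Sgap \<phi> 0 < 0"
    using gt_half_pi lt_pi by (simp add: Sgap_def sin_lt_zero)
  moreover have "0 < Sgap \<phi> \<phi>"
    using gt_0 by (simp add: Sgap_def)
  moreover have "continuous_on {0..\<phi>} (Sgap \<phi>)"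
    unfolding Sgap_def by (intro continuous_intros)
  ultimately obtain S where S: "0 \<le> S" "S \<le> \<phi>" "Sgap \<phi> S = 0"
    using IVT'[of "Sgap \<phi>" 0 0 \<phi>] gt_0 by force
  with \<open>Sgap \<phi> 0 < 0\<close> \<open>0 < Sgap \<phi> \<phi>\<close> have "0 < S" "S < \<phi>"
    by (auto simp: le_less)
  show ?thesis
  proof (rule ex1I[of _ S])
    fix T assume "0 < T \<and> T < \<phi> \<and> sin (2 * T - 2 * \<phi>) = 2 * T"
    then have "0 < T" "T < \<phi>" "Sgap \<phi> T = 0"
      by (auto simp: Sgap_def)
    then show "T = S"
      using Sgap_strict_mono[of S T] Sgap_strict_mono[of T S] S by (cases T S rule: linorder_cases) auto
  qed (use S \<open>0 < S\<close> \<open>S < \<phi>\<close> in \<open>auto simp: Sgap_def\<close>)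
qed

abbreviation S where "S \<equiv> Sfun \<phi>"

lemma Sfun_spec: "0 < S" "S < \<phi>" "Sgap \<phi> S = 0"
  using theI'[OF Sfun_ex1] unfolding Sfun_def Sgap_def by auto

lemma Cfun_has_derivative:
  assumes "0 \<le> x" "x < \<phi>"
  shows "((\<lambda>t. Cfun t \<phi>) has_real_derivative - Sgap \<phi> x / (2 * (sin (\<phi> - x))\<^sup>2)) (at x)"
proof -
  have sin_neq: "sin (x - \<phi>) \<noteq> 0"
    using sin_diff_pos[OF assms] sin_diff_commute[of x \<phi>] by simp
  have "((\<lambda>t. cot (t - \<phi>)) has_real_derivative - inverse ((sin (x - \<phi>))\<^sup>2) * 1) (at x)"
    by (rule DERIV_chain2[where g="\<lambda>t. t - \<phi>", OF DERIV_cot[OF sin_neq]])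
       (auto intro!: derivative_eq_intros)
  from DERIV_mult[OF DERIV_ident this]
  have "((\<lambda>t. Cfun t \<phi>) has_real_derivative cot (x - \<phi>) - inverse ((sin (x - \<phi>))\<^sup>2) * x) (at x)"
    unfolding Cfun_def[abs_def] by simp
  moreover have "cot (x - \<phi>) - inverse ((sin (x - \<phi>))\<^sup>2) * x = - Sgap \<phi> x / (2 * (sin (\<phi> - x))\<^sup>2)"
  proof -
    have "sin (2 * x - 2 * \<phi>) = 2 * sin (x - \<phi>) * cos (x - \<phi>)"
      using sin_double[of "x - \<phi>"] by (simp add: algebra_simps)
    moreover have "(sin (\<phi> - x))\<^sup>2 = (sin (x - \<phi>))\<^sup>2"
      by (simp add: sin_diff_commute[of \<phi> x])
    ultimately show ?thesis
      using sin_neq by (simp add: Sgap_def cot_def field_simps power2_eq_square)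
  qed
  ultimately show ?thesis
    by simp
qed

lemma continuous_on_Cfun:
  assumes "0 \<le> a" "b < \<phi>"
  shows "continuous_on {a..b} (\<lambda>t. Cfun t \<phi>)"
proof -
  have "sin (\<phi> - x) \<noteq> 0" if "x \<in> {a..b}" for x
    using sin_diff_pos[of x] that assms by force
  then show ?thesis
    unfolding Cfun_eq by (auto intro!: continuous_intros)
qed

lemma Cfun_strict_mono:
  assumes "0 \<le> a" "a < b" "b \<le> S"
  shows "Cfun a \<phi> < Cfun b \<phi>"
proof (rule DERIV_pos_imp_increasing_open[OF \<open>a < b\<close>])
  fix x assume "a < x" "x < b"
  then have "Sgap \<phi> x < 0" and "0 < sin (\<phi> - x)"
    using Sgap_strict_mono[of x S] Sfun_spec sin_diff_pos[of x] assms by auto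
  then show "\<exists>y. ((\<lambda>t. Cfun t \<phi>) has_real_derivative y) (at x) \<and> 0 < y"
    using Cfun_has_derivative[of x] \<open>a < x\<close> \<open>x < b\<close> assms Sfun_spec by (force intro: divide_neg_pos)
qed (use assms Sfun_spec in \<open>auto intro: continuous_on_Cfun\<close>)

lemma Cfun_strict_antimono:
  assumes "S \<le> a" "a < b" "b < \<phi>"
  shows "Cfun b \<phi> < Cfun a \<phi>"
proof (rule DERIV_neg_imp_decreasing_open[OF \<open>a < b\<close>])
  fix x assume "a < x" "x < b"
  then have "0 < Sgap \<phi> x" and "0 < sin (\<phi> - x)"
    using Sgap_strict_mono[of S x] Sfun_spec sin_diff_pos[of x] assms by auto
  then show "\<exists>y. ((\<lambda>t. Cfun t \<phi>) has_real_derivative y) (at x) \<and> y < 0"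
    using Cfun_has_derivative[of x] \<open>a < x\<close> \<open>x < b\<close> assms Sfun_spec by (force intro: divide_neg_pos)
qed (use assms Sfun_spec in \<open>auto intro: continuous_on_Cfun\<close>)

lemma Cfun_0: "Cfun 0 \<phi> = 0"
  by (simp add: Cfun_def)

lemma Cfun_Sfun: "Cfun S \<phi> = Mfun \<phi>"
proof -
  obtain s c where s: "s = sin (S - \<phi>)" and c: "c = cos (S - \<phi>)"
    by blast
  have "S = s * c" and "s \<noteq> 0"
    using Sfun_spec sin_double[of "S - \<phi>"] sin_diff_pos[of S]
    by (auto simp: s c Sgap_def algebra_simps sin_diff)
  then have "S * c / s = c * c"
    by simp
  then show ?thesis
    unfolding Cfun_def Mfun_def cot_def s c by (simp add: power2_eq_square)
qed

lemma Cfun_le_Mfun: "0 \<le> x \<Longrightarrow> x < \<phi> \<Longrightarrow> Cfun x \<phi> \<le> Mfun \<phi>"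
  using Cfun_strict_mono[of x S] Cfun_strict_antimono[of S x] Cfun_Sfun
  by (cases x S rule: linorder_cases) auto

lemma Cfun_pos: "0 < y \<Longrightarrow> y \<le> S \<Longrightarrow> 0 < Cfun y \<phi>"
  using Cfun_strict_mono[of 0 y] Cfun_0 by simp

lemma Mfun_pos: "0 < Mfun \<phi>"
  using Cfun_pos[of S] Cfun_Sfun Sfun_spec by simp

lemma Cfun_unbounded_below: "\<exists>x. S \<le> x \<and> x < \<phi> \<and> Cfun x \<phi> \<le> r"
proof -
  define u where "u = min (pi / 3) (min (\<phi> - S) (S / (2 * (\<bar>r\<bar> + 1))))"
  have "0 < u"
    using Sfun_spec by (simp add: u_def)
  have u: "u \<le> pi / 3" "u \<le> \<phi> - S" "u \<le> S / (2 * (\<bar>r\<bar> + 1))"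
    unfolding u_def by (rule min.cobounded1 min.coboundedI2[OF min.cobounded1] min.coboundedI2[OF min.cobounded2])+
  define x where "x = \<phi> - u"
  have x: "S \<le> x" "x < \<phi>"
    using \<open>0 < u\<close> u by (auto simp: x_def)
  have "1 / 2 \<le> cos u"
    using cos_monotone_0_pi_le[of u "pi / 3"] \<open>0 < u\<close> u by (simp add: cos_60)
  moreover have "0 < sin u" "sin u \<le> u"
    using \<open>0 < u\<close> u sin_x_le_x[of u] pi_gt_zero by (auto intro!: sin_gt_zero)
  ultimately have "x * (1 / 2) / u \<le> x * cos u / sin u"
    using x Sfun_spec \<open>0 < u\<close> by (intro frac_le mult_left_mono) auto
  moreover have "S * (1 / 2) / u \<le> x * (1 / 2) / u"
    using x \<open>0 < u\<close> by (simp add: divide_right_mono)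
  moreover have "\<bar>r\<bar> + 1 \<le> S * (1 / 2) / u"
    using \<open>0 < u\<close> u(3) by (simp add: field_simps del: mult_le_cancel_left_pos)
  moreover have "Cfun x \<phi> = - (x * cos u / sin u)"
    by (simp add: Cfun_eq x_def)
  ultimately show ?thesis
    using x by (intro exI[of _ x]) linarith
qed

lemma C1inv_spec:
  assumes "0 \<le> r" "r \<le> Mfun \<phi>"
  shows "0 \<le> C1inv r \<phi>" "C1inv r \<phi> \<le> S" "Cfun (C1inv r \<phi>) \<phi> = r"
proof -
  obtain x where x: "0 \<le> x" "x \<le> S" "Cfun x \<phi> = r"
    using IVT'[of "\<lambda>t. Cfun t \<phi>" 0 r S] Cfun_0 Cfun_Sfun assms continuous_on_Cfun[of 0 S] Sfun_spec
    by auto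
  have "\<exists>!x. 0 \<le> x \<and> x \<le> S \<and> Cfun x \<phi> = r"
  proof (rule ex1I[of _ x])
    fix y assume "0 \<le> y \<and> y \<le> S \<and> Cfun y \<phi> = r"
    then show "y = x"
      using Cfun_strict_mono[of x y] Cfun_strict_mono[of y x] x by (cases x y rule: linorder_cases) auto
  qed (use x in auto)
  from theI'[OF this] show "0 \<le> C1inv r \<phi>" "C1inv r \<phi> \<le> S" "Cfun (C1inv r \<phi>) \<phi> = r"
    unfolding C1inv_def by auto
qed

lemma C2inv_spec:
  assumes "r \<le> Mfun \<phi>"
  shows "S \<le> C2inv r \<phi>" "C2inv r \<phi> < \<phi>" "Cfun (C2inv r \<phi>) \<phi> = r"
proof -
  obtain z where z: "S \<le> z" "z < \<phi>" "Cfun z \<phi> \<le> r"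
    using Cfun_unbounded_below by blast
  then obtain x where x: "S \<le> x" "x \<le> z" "Cfun x \<phi> = r"
    using IVT2'[of "\<lambda>t. Cfun t \<phi>" z r S] Cfun_Sfun assms continuous_on_Cfun[of S z] Sfun_spec
    by auto
  have "\<exists>!x. S \<le> x \<and> x < \<phi> \<and> Cfun x \<phi> = r"
  proof (rule ex1I[of _ x])
    fix y assume "S \<le> y \<and> y < \<phi> \<and> Cfun y \<phi> = r"
    then show "y = x"
      using Cfun_strict_antimono[of x y] Cfun_strict_antimono[of y x] x z
      by (cases x y rule: linorder_cases) auto
  qed (use x z in auto)
  from theI'[OF this] show "S \<le> C2inv r \<phi>" "C2inv r \<phi> < \<phi>" "Cfun (C2inv r \<phi>) \<phi> = r"
    unfolding C2inv_def by auto
qed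

lemma Cfun_le_iff_le_C1inv:
  assumes "0 \<le> r" "r \<le> Mfun \<phi>" "0 \<le> y" "y \<le> S"
  shows "Cfun y \<phi> \<le> r \<longleftrightarrow> y \<le> C1inv r \<phi>"
  using C1inv_spec[OF assms(1,2)] Cfun_strict_mono[of y "C1inv r \<phi>"] Cfun_strict_mono[of "C1inv r \<phi>" y] assms(3,4)
  by (cases y "C1inv r \<phi>" rule: linorder_cases) auto

lemma Cfun_le_iff_ge_C2inv:
  assumes "r \<le> Mfun \<phi>" "S \<le> y" "y < \<phi>"
  shows "Cfun y \<phi> \<le> r \<longleftrightarrow> C2inv r \<phi> \<le> y"
  using C2inv_spec[OF assms(1)] Cfun_strict_antimono[of y "C2inv r \<phi>"] Cfun_strict_antimono[of "C2inv r \<phi>" y] assms(2,3)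
  by (cases y "C2inv r \<phi>" rule: linorder_cases) auto

lemma Cfun_sublevel_nonpos:
  assumes "r \<le> 0"
  shows "{y \<in> {0<..<\<phi>}. Cfun y \<phi> \<le> r} = {C2inv r \<phi>..<\<phi>}"
proof -
  have r: "r \<le> Mfun \<phi>"
    using assms Mfun_pos by linarith
  have "Cfun y \<phi> \<le> r \<longleftrightarrow> C2inv r \<phi> \<le> y" if "0 < y" "y < \<phi>" for y
  proof (cases "S \<le> y")
    case False
    then show ?thesis
      using Cfun_pos[of y] C2inv_spec[OF r] that assms by auto
  qed (use Cfun_le_iff_ge_C2inv[OF r] that in auto)
  moreover have "0 < C2inv r \<phi>" "C2inv r \<phi> < \<phi>"
    using C2inv_spec[OF r] Sfun_spec by linarith+
  ultimately show ?thesis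
    by auto
qed

lemma Cfun_sublevel_between:
  assumes "0 < r" "r < Mfun \<phi>"
  shows "{y \<in> {0<..<\<phi>}. Cfun y \<phi> \<le> r} = {0<..C1inv r \<phi>} \<union> {C2inv r \<phi>..<\<phi>}"
proof -
  have r: "0 \<le> r" "r \<le> Mfun \<phi>"
    using assms by simp_all
  have "C1inv r \<phi> < S"
    using C1inv_spec[OF r] Cfun_Sfun assms by (auto simp: le_less)
  have "Cfun y \<phi> \<le> r \<longleftrightarrow> y \<le> C1inv r \<phi> \<or> C2inv r \<phi> \<le> y" if "0 < y" "y < \<phi>" for y
    using Cfun_le_iff_le_C1inv[OF r, of y] Cfun_le_iff_ge_C2inv[OF r(2), of y] that
      \<open>C1inv r \<phi> < S\<close> C2inv_spec(1)[OF r(2)]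
    by (cases "y \<le> S") auto
  moreover have "C1inv r \<phi> < \<phi>" "0 < C2inv r \<phi>" "C2inv r \<phi> < \<phi>"
    using \<open>C1inv r \<phi> < S\<close> C2inv_spec[OF r(2)] Sfun_spec by linarith+
  ultimately show ?thesis
    by auto
qed

lemma Cfun_sublevel_ge_Mfun:
  assumes "Mfun \<phi> \<le> r"
  shows "{y \<in> {0<..<\<phi>}. Cfun y \<phi> \<le> r} = {0<..<\<phi>}"
proof -
  have "Cfun y \<phi> \<le> r" if "0 < y" "y < \<phi>" for y
    using Cfun_le_Mfun[of y] that assms by linarith
  then show ?thesis
    by auto
qed

end

section \<open>The modulus along the principal branch\<close>

text \<open>For 0 < y < \<phi>, the equation u * exp u = L * cis \<phi> has a solution with Im u = y exactly
  when L = branch_modulus \<phi> y, and then Re u = -C(y;\<phi>) (lemma mult_exp_eq_principal_iff).\<close>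

definition branch_modulus :: "real \<Rightarrow> real \<Rightarrow> real" where
  "branch_modulus \<phi> y = y / sin (\<phi> - y) * exp (- Cfun y \<phi>)"

context obtuse_angle
begin

lemma continuous_on_branch_modulus:
  assumes "0 \<le> a" "b < \<phi>"
  shows "continuous_on {a..b} (branch_modulus \<phi>)"
proof -
  have "sin (\<phi> - x) \<noteq> 0" if "x \<in> {a..b}" for x
    using sin_diff_pos[of x] that assms by force
  then show ?thesis
    using continuous_on_Cfun[OF assms] unfolding branch_modulus_def[abs_def]
    by (auto intro!: continuous_intros)
qed

lemma branch_modulus_0: "branch_modulus \<phi> 0 = 0"
  by (simp add: branch_modulus_def)

lemma branch_modulus_pos: "0 < y \<Longrightarrow> y < \<phi> \<Longrightarrow> 0 < branch_modulus \<phi> y"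
  using sin_diff_pos[of y] by (simp add: branch_modulus_def)

lemma branch_modulus_has_derivative:
  assumes "0 \<le> y" "y < \<phi>"
  defines "s \<equiv> sin (\<phi> - y)" and "c \<equiv> cos (\<phi> - y)"
  shows "(branch_modulus \<phi> has_real_derivative
           exp (- Cfun y \<phi>) * (y\<^sup>2 + 2 * y * s * c + s\<^sup>2) / s ^ 3) (at y)"
proof -
  have s: "0 < s"
    using sin_diff_pos[OF assms(1,2)] by (simp add: s_def)
  have "((\<lambda>t. t / sin (\<phi> - t)) has_real_derivative (s + y * c) / s\<^sup>2) (at y)"
    using s unfolding s_def c_def
    by (auto intro!: derivative_eq_intros simp: field_simps power2_eq_square)
  moreover have "((\<lambda>t. exp (- Cfun t \<phi>)) has_real_derivative
      exp (- Cfun y \<phi>) * (Sgap \<phi> y / (2 * s\<^sup>2))) (at y)"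
    using DERIV_chain2[OF DERIV_exp DERIV_minus[OF Cfun_has_derivative[OF assms(1,2)]]]
    by (simp add: s_def)
  ultimately have "(branch_modulus \<phi> has_real_derivative
      (s + y * c) / s\<^sup>2 * exp (- Cfun y \<phi>) + exp (- Cfun y \<phi>) * (Sgap \<phi> y / (2 * s\<^sup>2)) * (y / s)) (at y)"
    unfolding branch_modulus_def[abs_def] s_def by (rule DERIV_mult)
  then show ?thesis
  proof (rule DERIV_cong)
    have "Sgap \<phi> y = 2 * y + 2 * s * c"
      using sin_double[of "\<phi> - y"] sin_minus[of "2 * \<phi> - 2 * y"]
      by (simp add: Sgap_def s_def c_def algebra_simps)
    then show "(s + y * c) / s\<^sup>2 * exp (- Cfun y \<phi>) + exp (- Cfun y \<phi>) * (Sgap \<phi> y / (2 * s\<^sup>2)) * (y / s)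
        = exp (- Cfun y \<phi>) * (y\<^sup>2 + 2 * y * s * c + s\<^sup>2) / s ^ 3"
      using s by (simp add: field_simps power2_eq_square power3_eq_cube)
  qed
qed

lemma branch_modulus_strict_mono:
  assumes "0 \<le> a" "a < b" "b < \<phi>"
  shows "branch_modulus \<phi> a < branch_modulus \<phi> b"
proof (rule DERIV_pos_imp_increasing_open[OF \<open>a < b\<close>])
  fix y assume y: "a < y" "y < b"
  define s c where "s = sin (\<phi> - y)" and "c = cos (\<phi> - y)"
  have "0 < s"
    using sin_diff_pos[of y] y assms by (simp add: s_def)
  moreover have "y\<^sup>2 + 2 * y * s * c + s\<^sup>2 = (y + s * c)\<^sup>2 + (s\<^sup>2)\<^sup>2"
  proof -
    have "(y + s * c)\<^sup>2 + (s\<^sup>2)\<^sup>2 = y\<^sup>2 + 2 * y * s * c + s\<^sup>2 * (s\<^sup>2 + c\<^sup>2)"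
      by (simp add: power2_eq_square algebra_simps)
    then show ?thesis
      by (simp add: s_def c_def)
  qed
  ultimately have "0 < exp (- Cfun y \<phi>) * (y\<^sup>2 + 2 * y * s * c + s\<^sup>2) / s ^ 3"
    by (simp add: add_nonneg_pos)
  then show "\<exists>d. (branch_modulus \<phi> has_real_derivative d) (at y) \<and> 0 < d"
    using branch_modulus_has_derivative[of y] y assms unfolding s_def c_def by force
qed (use assms continuous_on_branch_modulus in auto)

lemma branch_modulus_unbounded:
  assumes "0 \<le> c" "c < \<phi>"
  shows "\<exists>y. c \<le> y \<and> y < \<phi> \<and> L \<le> branch_modulus \<phi> y"
proof -
  define d where "d = min (pi / 2) (min (\<phi> - c) ((\<phi> - pi / 2) / (\<bar>L\<bar> + 1)))"
  have "0 < d"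
    using assms gt_half_pi by (simp add: d_def)
  have d: "d \<le> pi / 2" "d \<le> \<phi> - c" "d \<le> (\<phi> - pi / 2) / (\<bar>L\<bar> + 1)"
    unfolding d_def by (rule min.cobounded1 min.coboundedI2[OF min.cobounded1] min.coboundedI2[OF min.cobounded2])+
  define y where "y = \<phi> - d"
  have y: "c \<le> y" "y < \<phi>" "\<phi> - pi / 2 \<le> y"
    using \<open>0 < d\<close> d by (auto simp: y_def)
  have "0 < sin d" "sin d \<le> d" "0 \<le> cos d"
    using \<open>0 < d\<close> d sin_x_le_x[of d] pi_gt_zero by (auto intro!: sin_gt_zero cos_ge_zero)
  have "Cfun y \<phi> = - (y * cos d / sin d)"
    by (simp add: Cfun_eq y_def)
  then have "Cfun y \<phi> \<le> 0"
    using y gt_half_pi \<open>0 < sin d\<close> \<open>0 \<le> cos d\<close> by simp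
  then have "1 \<le> exp (- Cfun y \<phi>)"
    by simp
  have "L * d \<le> (\<bar>L\<bar> + 1) * d"
    using \<open>0 < d\<close> by (intro mult_right_mono) auto
  also have "\<dots> \<le> \<phi> - pi / 2"
    using d(3) \<open>0 < d\<close> by (simp add: pos_le_divide_eq mult.commute)
  finally have "L \<le> (\<phi> - pi / 2) / d"
    using \<open>0 < d\<close> by (simp add: pos_le_divide_eq)
  also have "\<dots> \<le> y / d"
    using y \<open>0 < d\<close> by (simp add: divide_right_mono)
  also have "\<dots> \<le> y / sin d"
    using y gt_half_pi \<open>0 < sin d\<close> \<open>sin d \<le> d\<close> by (intro divide_left_mono) auto
  also have "\<dots> \<le> y / sin d * exp (- Cfun y \<phi>)"
  proof -
    have "0 \<le> y / sin d"
      using \<open>0 < sin d\<close> y gt_half_pi by simp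
    then show ?thesis
      using \<open>1 \<le> exp (- Cfun y \<phi>)\<close> mult_left_mono[of 1 "exp (- Cfun y \<phi>)" "y / sin d"] by simp
  qed
  also have "\<dots> = branch_modulus \<phi> y"
    by (simp add: branch_modulus_def y_def)
  finally show ?thesis
    using y by blast
qed

lemma branch_modulus_mono: "0 \<le> a \<Longrightarrow> a \<le> b \<Longrightarrow> b < \<phi> \<Longrightarrow> branch_modulus \<phi> a \<le> branch_modulus \<phi> b"
  using branch_modulus_strict_mono[of a b] by (cases "a = b") auto

lemma branch_modulus_image_atLeastLessThan:
  assumes "0 \<le> c" "c < \<phi>"
  shows "branch_modulus \<phi> ` {c..<\<phi>} = {branch_modulus \<phi> c..}"
proof
  show "branch_modulus \<phi> ` {c..<\<phi>} \<subseteq> {branch_modulus \<phi> c..}"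
    using branch_modulus_mono assms by auto
next
  show "{branch_modulus \<phi> c..} \<subseteq> branch_modulus \<phi> ` {c..<\<phi>}"
  proof
    fix L assume "L \<in> {branch_modulus \<phi> c..}"
    moreover obtain z where "c \<le> z" "z < \<phi>" "L \<le> branch_modulus \<phi> z"
      using branch_modulus_unbounded[OF assms] by blast
    ultimately obtain y where "c \<le> y" "y \<le> z" "branch_modulus \<phi> y = L"
      using IVT'[of "branch_modulus \<phi>" c L z] continuous_on_branch_modulus[of c z] assms by auto
    then show "L \<in> branch_modulus \<phi> ` {c..<\<phi>}"
      using \<open>z < \<phi>\<close> by force
  qed
qed

lemma branch_modulus_image_greaterThanAtMost:
  assumes "0 \<le> c" "c < \<phi>"
  shows "branch_modulus \<phi> ` {0<..c} = {0<..branch_modulus \<phi> c}"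
proof
  show "branch_modulus \<phi> ` {0<..c} \<subseteq> {0<..branch_modulus \<phi> c}"
    using branch_modulus_mono branch_modulus_pos assms by auto
next
  show "{0<..branch_modulus \<phi> c} \<subseteq> branch_modulus \<phi> ` {0<..c}"
  proof
    fix L assume L: "L \<in> {0<..branch_modulus \<phi> c}"
    then obtain y where "0 \<le> y" "y \<le> c" "branch_modulus \<phi> y = L"
      using IVT'[of "branch_modulus \<phi>" 0 L c] continuous_on_branch_modulus[of 0 c]
        branch_modulus_0 assms by auto
    moreover have "y \<noteq> 0"
      using L \<open>branch_modulus \<phi> y = L\<close> branch_modulus_0 by auto
    ultimately show "L \<in> branch_modulus \<phi> ` {0<..c}"
      by force
  qed
qed

lemma branch_modulus_image: "branch_modulus \<phi> ` {0<..<\<phi>} = {0<..}"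
proof -
  have "{0<..<\<phi>} = {0<..S} \<union> {S..<\<phi>}"
    using Sfun_spec by auto
  moreover have "0 < branch_modulus \<phi> S"
    using branch_modulus_pos Sfun_spec by simp
  ultimately show ?thesis
    using branch_modulus_image_greaterThanAtMost[of S] branch_modulus_image_atLeastLessThan[of S] Sfun_spec
    by (auto simp: image_Un)
qed

lemma branch_point_exists_iff:
  assumes "0 < L"
  shows "(\<exists>y\<in>{0<..<\<phi>}. Cfun y \<phi> \<le> r \<and> branch_modulus \<phi> y = L) \<longleftrightarrow>
    \<not> (r \<le> 0 \<and> L < branch_modulus \<phi> (C2inv r \<phi>) \<or>
       0 < r \<and> r < Mfun \<phi> \<and> branch_modulus \<phi> (C1inv r \<phi>) < L \<and> L < branch_modulus \<phi> (C2inv r \<phi>))"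
proof -
  have "(\<exists>y\<in>{0<..<\<phi>}. Cfun y \<phi> \<le> r \<and> branch_modulus \<phi> y = L) \<longleftrightarrow>
      L \<in> branch_modulus \<phi> ` {y \<in> {0<..<\<phi>}. Cfun y \<phi> \<le> r}"
    by auto
  moreover consider "r \<le> 0" | "0 < r" "r < Mfun \<phi>" | "Mfun \<phi> \<le> r"
    by linarith
  then have "L \<in> branch_modulus \<phi> ` {y \<in> {0<..<\<phi>}. Cfun y \<phi> \<le> r} \<longleftrightarrow>
    \<not> (r \<le> 0 \<and> L < branch_modulus \<phi> (C2inv r \<phi>) \<or>
       0 < r \<and> r < Mfun \<phi> \<and> branch_modulus \<phi> (C1inv r \<phi>) < L \<and> L < branch_modulus \<phi> (C2inv r \<phi>))"
  proof cases
    case 1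
    then have "r \<le> Mfun \<phi>"
      using Mfun_pos by linarith
    then show ?thesis
      using 1 Cfun_sublevel_nonpos branch_modulus_image_atLeastLessThan C2inv_spec[of r] Sfun_spec by auto
  next
    case 2
    then show ?thesis
      using assms Cfun_sublevel_between[OF 2] C1inv_spec[of r] C2inv_spec[of r] Sfun_spec
        branch_modulus_image_greaterThanAtMost[of "C1inv r \<phi>"] branch_modulus_image_atLeastLessThan[of "C2inv r \<phi>"]
      by (auto simp: image_Un)
  next
    case 3
    then show ?thesis
      using assms Cfun_sublevel_ge_Mfun branch_modulus_image Mfun_pos by auto
  qed
  ultimately show ?thesis
    by blast
qed

lemma branch_modulus_C1inv:
  assumes "0 \<le> r" "r \<le> Mfun \<phi>"
  shows "branch_modulus \<phi> (C1inv r \<phi>) = R1 r \<phi> * exp (- r)"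
  using C1inv_spec[OF assms] sin_diff_commute[of "C1inv r \<phi>" \<phi>]
  by (simp add: branch_modulus_def R1_def minus_divide_divide)

lemma branch_modulus_C2inv:
  assumes "r \<le> Mfun \<phi>"
  shows "branch_modulus \<phi> (C2inv r \<phi>) = R2 r \<phi> * exp (- r)"
  using C2inv_spec[OF assms] sin_diff_commute[of "C2inv r \<phi>" \<phi>]
  by (simp add: branch_modulus_def R2_def minus_divide_divide)

end


section \<open>Solutions of u * exp u = L * cis \<phi>\<close>

lemma mult_exp_eq_iff:
  fixes u :: complex
  shows "u * exp u = of_real L * cis \<phi> \<longleftrightarrow>
    Re u = L * exp (- Re u) * cos (\<phi> - Im u) \<and> Im u = L * exp (- Re u) * sin (\<phi> - Im u)"
proof -
  have "exp u = of_real (exp (Re u)) * cis (Im u)"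
    by (rule exp_eq_polar)
  then have "u * exp u = of_real L * cis \<phi> \<longleftrightarrow> u = of_real L * cis \<phi> / (of_real (exp (Re u)) * cis (Im u))"
    by (auto simp: field_simps)
  also have "of_real L * cis \<phi> / (of_real (exp (Re u)) * cis (Im u)) = of_real (L * exp (- Re u)) * cis (\<phi> - Im u)"
    by (simp add: field_simps exp_minus cis_mult)
  finally show ?thesis
    by (simp add: complex_eq_iff)
qed

lemma mult_exp_eq_pos_ex: "0 < L \<Longrightarrow> \<exists>b>0. b * exp b = (L :: real)"
proof -
  assume "0 < L"
  moreover have "L \<le> L * exp L"
    using \<open>0 < L\<close> by simp
  moreover have "continuous_on {0..L} (\<lambda>t. t * exp t)"
    by (intro continuous_intros)
  ultimately obtain b where "0 \<le> b" "b * exp b = L"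
    using IVT'[of "\<lambda>t. t * exp t" 0 L L] by auto
  with \<open>0 < L\<close> show ?thesis
    by (intro exI[of _ b]) (auto simp: le_less)
qed

lemma neg_mult_exp_strict_antimono:
  fixes a b :: real
  assumes "-1 \<le> a" "a < b"
  shows "- b * exp b < - a * exp a"
proof (rule DERIV_neg_imp_decreasing_open[OF \<open>a < b\<close>])
  fix x assume "a < x" "x < b"
  then have "- ((1 + x) * exp x) < 0"
    using assms by simp
  then show "\<exists>y. ((\<lambda>t. - t * exp t) has_real_derivative y) (at x) \<and> y < 0"
    by (auto intro!: derivative_eq_intros simp: algebra_simps)
qed (auto intro!: continuous_intros)

lemma neg_mult_exp_le: "- t * exp t \<le> exp (-1 :: real)"
proof -
  have "- t \<le> exp (- t - 1)"
    using exp_ge_add_one_self[of "- t - 1"] by simp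
  then have "- t * exp t \<le> exp (- t - 1) * exp t"
    by (intro mult_right_mono) auto
  also have "\<dots> = exp (-1)"
    by (simp flip: exp_add)
  finally show ?thesis .
qed

text \<open>A solution u with Re u = t has \<bar>u\<bar> = L * exp (-t), so (Im u)^2 = root_Im_sq L t; if moreover
  Im u > 0, the remaining condition arg u = \<phi> - Im u reads root_angle L t = \<phi>.\<close>

definition root_Im_sq :: "real \<Rightarrow> real \<Rightarrow> real" where
  "root_Im_sq L t = (L * exp (- t))\<^sup>2 - t\<^sup>2"

definition root_angle :: "real \<Rightarrow> real \<Rightarrow> real" where
  "root_angle L t = arccos (t * exp t / L) + sqrt (root_Im_sq L t)"

lemma root_Im_sq_pos_iff:
  assumes "0 < L"
  shows "0 < root_Im_sq L t \<longleftrightarrow> \<bar>t\<bar> * exp t < L"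
proof -
  have "0 < root_Im_sq L t \<longleftrightarrow> \<bar>t\<bar> < L * exp (- t)"
    using abs_le_square_iff[of "L * exp (- t)" t] assms by (simp add: root_Im_sq_def not_le[symmetric])
  also have "\<dots> \<longleftrightarrow> \<bar>t\<bar> * exp t < L"
    by (simp add: exp_minus field_simps)
  finally show ?thesis .
qed

lemma root_Im_sq_nonneg_iff:
  assumes "0 < L"
  shows "0 \<le> root_Im_sq L t \<longleftrightarrow> \<bar>t\<bar> * exp t \<le> L"
proof -
  have "0 \<le> root_Im_sq L t \<longleftrightarrow> \<bar>t\<bar> \<le> L * exp (- t)"
    using abs_le_square_iff[of t "L * exp (- t)"] assms by (simp add: root_Im_sq_def)
  also have "\<dots> \<longleftrightarrow> \<bar>t\<bar> * exp t \<le> L"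
    by (simp add: exp_minus field_simps)
  finally show ?thesis .
qed

lemma root_Im_sq_Re:
  assumes "u * exp u = of_real L * cis \<phi>"
  shows "root_Im_sq L (Re u) = (Im u)\<^sup>2"
proof -
  define \<rho> \<theta> where "\<rho> = L * exp (- Re u)" and "\<theta> = \<phi> - Im u"
  have re: "Re u = \<rho> * cos \<theta>" and im: "Im u = \<rho> * sin \<theta>"
    using assms by (simp_all add: mult_exp_eq_iff \<rho>_def \<theta>_def)
  have "root_Im_sq L (Re u) = \<rho>\<^sup>2 - (Re u)\<^sup>2"
    by (simp add: root_Im_sq_def \<rho>_def)
  also have "\<dots> = (\<rho> * sin \<theta>)\<^sup>2"
    unfolding re by (simp add: power_mult_distrib sin_squared_eq algebra_simps)
  finally show ?thesis
    by (simp add: im)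
qed

lemma root_Im_sq_pos:
  assumes "0 < b" "b * exp b = L" "t < b" "t < 0 \<Longrightarrow> - t * exp t < L"
  shows "0 < root_Im_sq L t"
proof -
  have "0 < L"
    using assms(1,2) by (metis exp_gt_zero mult_pos_pos)
  show ?thesis
  proof (cases "0 \<le> t")
    case True
    then have "t * exp t < b * exp b"
      using assms by (intro mult_strict_mono) auto
    then show ?thesis
      using True assms root_Im_sq_pos_iff[OF \<open>0 < L\<close>] by simp
  next
    case False
    then show ?thesis
      using assms root_Im_sq_pos_iff[OF \<open>0 < L\<close>] by simp
  qed
qed

lemma root_Im_sq_pos_right:
  assumes "0 < b" "b * exp b = L" "0 < root_Im_sq L t" "-1 \<le> t \<or> exp (-1) < L"
  shows "t < b" "t < s \<Longrightarrow> s < b \<Longrightarrow> 0 < root_Im_sq L s"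
proof -
  have "0 < L"
    using assms(1,2) by (metis exp_gt_zero mult_pos_pos)
  have "\<bar>t\<bar> * exp t < b * exp b"
    using assms(2,3) root_Im_sq_pos_iff[OF \<open>0 < L\<close>] by simp
  show "t < b"
  proof (rule ccontr)
    assume "\<not> t < b"
    then have "b * exp b \<le> \<bar>t\<bar> * exp t"
      using assms(1) by (intro mult_mono) auto
    then show False
      using \<open>\<bar>t\<bar> * exp t < b * exp b\<close> by simp
  qed
  assume "t < s" "s < b"
  show "0 < root_Im_sq L s"
  proof (rule root_Im_sq_pos[OF assms(1,2) \<open>s < b\<close>])
    assume "s < 0"
    then have "- t * exp t < L"
      using assms(3) root_Im_sq_pos_iff[OF \<open>0 < L\<close>] \<open>t < s\<close> by simp
    then show "- s * exp s < L"
      using assms(4) neg_mult_exp_strict_antimono[of t s] neg_mult_exp_le[of s] \<open>t < s\<close> by linarith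
  qed
qed

lemma neg_mult_exp_eq_ex:
  assumes "0 < L" "L \<le> exp (-1)"
  obtains T where "-1 \<le> T" "T < 0" "- T * exp T = L" "root_Im_sq L T = 0" "root_angle L T = pi"
proof -
  have "continuous_on {-1..0} (\<lambda>s::real. - s * exp s)"
    by (intro continuous_intros)
  then obtain T where T: "-1 \<le> T" "T \<le> 0" "- T * exp T = L"
    using IVT2'[of "\<lambda>s. - s * exp s" 0 L "-1"] assms by auto
  then have "T < 0"
    using assms(1) by (cases "T = 0") auto
  have "L * exp (- T) = - T"
    using T(3) by (simp add: exp_minus field_simps)
  then have "root_Im_sq L T = 0"
    by (simp add: root_Im_sq_def)
  moreover have "T * exp T / L = -1"
    using T(3) assms(1) by (simp add: field_simps)
  ultimately show ?thesis
    using that T \<open>T < 0\<close> by (simp add: root_angle_def)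
qed

lemma root_angle_root:
  assumes "0 < L" "0 < root_Im_sq L t" "root_angle L t = \<phi>"
  defines "Y \<equiv> sqrt (root_Im_sq L t)"
  shows "Complex t Y * exp (Complex t Y) = of_real L * cis \<phi>" "0 < Y" "Y < \<phi>"
proof -
  define q \<rho> where "q = t * exp t / L" and "\<rho> = L * exp (- t)"
  have "\<bar>t\<bar> * exp t < L"
    using assms(1,2) root_Im_sq_pos_iff by blast
  then have "\<bar>q\<bar> < 1"
    using assms(1) by (simp add: q_def abs_mult pos_divide_less_eq)
  then have q: "-1 \<le> q" "q \<le> 1" "q \<noteq> 1"
    by auto
  show "0 < Y"
    using assms(2) by (simp add: Y_def)
  have angle: "\<phi> - Y = arccos q"
    using assms(3) by (simp add: root_angle_def q_def Y_def)
  have "0 < arccos q"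
    using arccos_lbound[of q] arccos_eq_0_iff[of q] q by force
  then show "Y < \<phi>"
    using angle by simp
  have "t = \<rho> * q" "0 < \<rho>"
    using assms(1) by (simp_all add: \<rho>_def q_def exp_minus field_simps)
  have "\<rho> * sin (\<phi> - Y) = \<rho> * sqrt (1 - q\<^sup>2)"
    using angle sin_arccos[of q] q by simp
  also have "\<dots> = sqrt (\<rho>\<^sup>2 * (1 - q\<^sup>2))"
    using \<open>0 < \<rho>\<close> by (simp add: real_sqrt_mult)
  also have "\<dots> = sqrt (\<rho>\<^sup>2 - t\<^sup>2)"
    by (simp add: \<open>t = \<rho> * q\<close> power_mult_distrib right_diff_distrib)
  also have "\<dots> = Y"
    by (simp add: Y_def root_Im_sq_def \<rho>_def)
  finally have "\<rho> * sin (\<phi> - Y) = Y" .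
  moreover have "L * exp (- t) = \<rho>"
    by (simp add: \<rho>_def)
  ultimately show "Complex t Y * exp (Complex t Y) = of_real L * cis \<phi>"
    unfolding mult_exp_eq_iff complex.sel using angle cos_arccos[of q] q \<open>t = \<rho> * q\<close> by simp
qed

context obtuse_angle
begin

lemma mult_exp_eq_principal_iff:
  assumes "0 < Im u" "Im u < \<phi>"
  shows "u * exp u = of_real L * cis \<phi> \<longleftrightarrow>
    Re u = - Cfun (Im u) \<phi> \<and> L = branch_modulus \<phi> (Im u)"
proof -
  define s c where "s = sin (\<phi> - Im u)" and "c = cos (\<phi> - Im u)"
  have "0 < s"
    using sin_diff_pos[of "Im u"] assms by (simp add: s_def)
  have C: "- Cfun (Im u) \<phi> = Im u / s * c" and k: "branch_modulus \<phi> (Im u) = Im u / s * exp (- Cfun (Im u) \<phi>)"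
    by (simp_all add: Cfun_eq branch_modulus_def s_def c_def)
  obtain \<rho> where \<rho>: "\<rho> = L * exp (- Re u)"
    by blast
  have "Re u = \<rho> * c \<and> Im u = \<rho> * s \<longleftrightarrow> \<rho> = Im u / s \<and> Re u = Im u / s * c"
  proof
    assume h: "Re u = \<rho> * c \<and> Im u = \<rho> * s"
    then have "\<rho> = Im u / s"
      using \<open>0 < s\<close> by simp
    with h show "\<rho> = Im u / s \<and> Re u = Im u / s * c"
      by simp
  qed (use \<open>0 < s\<close> in simp)
  also have "\<dots> \<longleftrightarrow> Re u = - Cfun (Im u) \<phi> \<and> L = branch_modulus \<phi> (Im u)"
    unfolding C k \<rho> by (auto simp: exp_minus field_simps)
  finally show ?thesis
    by (simp add: mult_exp_eq_iff s_def c_def \<rho>)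
qed

lemma principal_root_between:
  assumes "0 < L" "T < b" "b * exp b = L" "0 \<le> root_Im_sq L T"
    and Im_sq_pos: "\<And>t. T < t \<Longrightarrow> t < b \<Longrightarrow> 0 < root_Im_sq L t"
    and "\<phi> < root_angle L T"
  shows "\<exists>v. v * exp v = of_real L * cis \<phi> \<and> T < Re v \<and> 0 < Im v \<and> Im v < \<phi>"
proof -
  have "L * exp (- b) = b"
    using assms(3) by (simp add: exp_minus field_simps)
  then have Fb: "root_Im_sq L b = 0"
    by (simp add: root_Im_sq_def)
  have "-1 \<le> t * exp t / L \<and> t * exp t / L \<le> 1" if "t \<in> {T..b}" for t
  proof -
    have "0 \<le> root_Im_sq L t"
      using that assms(4) Im_sq_pos Fb by (cases "t = T \<or> t = b") (auto intro: less_imp_le)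
    then have "\<bar>t * exp t / L\<bar> \<le> 1"
      using root_Im_sq_nonneg_iff[OF \<open>0 < L\<close>] \<open>0 < L\<close> by (simp add: abs_mult)
    then show ?thesis
      by (metis abs_le_iff minus_le_iff)
  qed
  then have "continuous_on {T..b} (root_angle L)"
    unfolding root_angle_def root_Im_sq_def using \<open>0 < L\<close>
    by (auto intro!: continuous_intros)
  moreover have "root_angle L b = 0"
    using Fb assms(3) \<open>0 < L\<close> by (simp add: root_angle_def)
  ultimately obtain t where t: "T \<le> t" "t \<le> b" "root_angle L t = \<phi>"
    using IVT2'[of "root_angle L" b \<phi> T] assms(2,6) gt_0 by auto
  then have "T < t" "t < b"
    using assms(6) \<open>root_angle L b = 0\<close> gt_0 by (auto simp: le_less)
  with t show ?thesis
    using root_angle_root[OF \<open>0 < L\<close> Im_sq_pos[OF \<open>T < t\<close> \<open>t < b\<close>] t(3)]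
    by (intro exI[of _ "Complex t (sqrt (root_Im_sq L t))"]) auto
qed

lemma arccos_cos_add_abs_gt:
  assumes "0 < \<rho>" "y = \<rho> * sin (\<phi> - y)" "y \<noteq> 0" "\<not> (0 < y \<and> y < \<phi>)"
  shows "\<phi> < arccos (cos (\<phi> - y)) + \<bar>y\<bar>"
proof (cases "\<phi> \<le> y")
  case True
  have "sin (\<phi> - y) \<noteq> 0"
    using assms(2,3) by auto
  then have "cos (\<phi> - y) \<noteq> 1"
    using sin_squared_eq[of "\<phi> - y"] by auto
  moreover have c: "-1 \<le> cos (\<phi> - y)" "cos (\<phi> - y) \<le> 1"
    by simp_all
  ultimately have "0 < arccos (cos (\<phi> - y))"
    using arccos_lbound[OF c] arccos_eq_0_iff[of "cos (\<phi> - y)"] by force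
  then show ?thesis
    using True gt_0 by simp
next
  case False
  then have "y < 0"
    using assms(3,4) by auto
  define \<theta> \<alpha> where "\<theta> = \<phi> - y" and "\<alpha> = arccos (cos \<theta>)"
  have "\<rho> * sin \<theta> < 0"
    using assms(2) \<open>y < 0\<close> by (simp add: \<theta>_def)
  then have "sin \<theta> < 0"
    using assms(1) by (simp add: mult_less_0_iff)
  have "sin \<alpha> = - sin \<theta>"
    using sin_arccos[of "cos \<theta>"] \<open>sin \<theta> < 0\<close> by (simp add: \<alpha>_def cos_squared_eq)
  then have "cos (\<alpha> + \<theta>) = 1"
    using sin_cos_squared_add[of \<theta>] by (simp add: cos_add \<alpha>_def power2_eq_square)
  then obtain n :: int where n: "\<alpha> + \<theta> = n * 2 * pi"
    by (auto simp: cos_one_2pi_int)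
  moreover have "0 \<le> \<alpha>" "0 < \<theta>"
    using arccos_lbound[of "cos \<theta>"] gt_0 \<open>y < 0\<close> by (simp_all add: \<alpha>_def \<theta>_def)
  ultimately have "0 < real_of_int n * (2 * pi)"
    by linarith
  then have "0 < n"
    by (simp add: zero_less_mult_iff)
  then have "2 * pi \<le> \<alpha> + \<theta>"
    using n by simp
  then show ?thesis
    using \<open>y < 0\<close> lt_pi by (simp add: \<alpha>_def \<theta>_def)
qed

lemma off_branch_root_angle_gt:
  assumes "0 < L" "u * exp u = of_real L * cis \<phi>" "\<not> (0 < Im u \<and> Im u < \<phi>)"
  shows "0 < root_Im_sq L (Re u)" "\<phi> < root_angle L (Re u)"
proof -
  define \<rho> where "\<rho> = L * exp (- Re u)"
  have "0 < \<rho>"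
    using assms(1) by (simp add: \<rho>_def)
  have re: "Re u = \<rho> * cos (\<phi> - Im u)" and im: "Im u = \<rho> * sin (\<phi> - Im u)"
    using assms(2) by (simp_all add: mult_exp_eq_iff \<rho>_def)
  have "Im u \<noteq> 0"
    using im \<open>0 < \<rho>\<close> sin_pos by auto
  then show "0 < root_Im_sq L (Re u)"
    using root_Im_sq_Re[OF assms(2)] by simp
  have "Re u * exp (Re u) / L = cos (\<phi> - Im u)"
    using re assms(1) by (simp add: \<rho>_def exp_minus field_simps)
  then have "root_angle L (Re u) = arccos (cos (\<phi> - Im u)) + \<bar>Im u\<bar>"
    using root_Im_sq_Re[OF assms(2)] by (simp add: root_angle_def)
  then show "\<phi> < root_angle L (Re u)"
    using arccos_cos_add_abs_gt[OF \<open>0 < \<rho>\<close> im \<open>Im u \<noteq> 0\<close> assms(3)] by simp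
qed

lemma principal_root_dominates:
  assumes "0 < L" "u * exp u = of_real L * cis \<phi>"
  shows "\<exists>v. v * exp v = of_real L * cis \<phi> \<and> Re u \<le> Re v \<and> 0 < Im v \<and> Im v < \<phi>"
proof (cases "0 < Im u \<and> Im u < \<phi>")
  case True
  then show ?thesis
    using assms by blast
next
  case False
  define t where "t = Re u"
  have F: "0 < root_Im_sq L t" and angle: "\<phi> < root_angle L t"
    using off_branch_root_angle_gt[OF assms False] by (simp_all add: t_def)
  obtain b where b: "0 < b" "b * exp b = L"
    using mult_exp_eq_pos_ex[OF assms(1)] by blast
  consider "-1 \<le> t \<or> exp (-1) < L" | "t < -1" "L \<le> exp (-1)"
    by linarith
  then show ?thesis
  proof cases
    case 1
    then have "t < b" "\<And>s. t < s \<Longrightarrow> s < b \<Longrightarrow> 0 < root_Im_sq L s"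
      using root_Im_sq_pos_right[OF b F] by blast+
    then show ?thesis
      using principal_root_between[OF assms(1) _ b(2) less_imp_le[OF F] _ angle]
      by (force simp: t_def)
  next
    case 2
    txt \<open>Here root_Im_sq L may vanish between t and 0, so restart the continuity argument from
      the solution T \<in> [-1, 0] of -T e^T = L, where root_angle L T = \<pi>.\<close>
    obtain T where T: "-1 \<le> T" "T < 0" "- T * exp T = L" "root_Im_sq L T = 0" "root_angle L T = pi"
      using neg_mult_exp_eq_ex[OF assms(1) 2(2)] by blast
    have "0 < root_Im_sq L s" if "T < s" "s < b" for s
      using root_Im_sq_pos[OF b \<open>s < b\<close>] neg_mult_exp_strict_antimono[of T s] T that by auto
    moreover have "T < b" "\<phi> < root_angle L T"
      using T b(1) lt_pi by simp_all
    ultimately obtain v where "v * exp v = of_real L * cis \<phi>" "T < Re v" "0 < Im v" "Im v < \<phi>"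
      using principal_root_between[OF assms(1) \<open>T < b\<close> b(2) _ _ \<open>\<phi> < root_angle L T\<close>] T(4) by auto
    then show ?thesis
      using T(1) 2 by (intro exI[of _ v]) (auto simp: t_def)
  qed
qed

lemma solution_Re_ge_exists_iff:
  assumes "0 < L"
  shows "(\<exists>u. u * exp u = of_real L * cis \<phi> \<and> c \<le> Re u) \<longleftrightarrow>
    (\<exists>y\<in>{0<..<\<phi>}. Cfun y \<phi> \<le> - c \<and> branch_modulus \<phi> y = L)"
proof
  assume "\<exists>u. u * exp u = of_real L * cis \<phi> \<and> c \<le> Re u"
  then obtain v where "v * exp v = of_real L * cis \<phi>" "c \<le> Re v" "0 < Im v" "Im v < \<phi>"
    using principal_root_dominates[OF assms] by (meson order_trans)
  then show "\<exists>y\<in>{0<..<\<phi>}. Cfun y \<phi> \<le> - c \<and> branch_modulus \<phi> y = L"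
    using mult_exp_eq_principal_iff by force
next
  assume "\<exists>y\<in>{0<..<\<phi>}. Cfun y \<phi> \<le> - c \<and> branch_modulus \<phi> y = L"
  then obtain y where "0 < y" "y < \<phi>" "Cfun y \<phi> \<le> - c" "branch_modulus \<phi> y = L"
    by auto
  then show "\<exists>u. u * exp u = of_real L * cis \<phi> \<and> c \<le> Re u"
    using mult_exp_eq_principal_iff[of "Complex (- Cfun y \<phi>) y" L]
    by (intro exI[of _ "Complex (- Cfun y \<phi>) y"]) auto
qed

end

section \<open>The characteristic equation\<close>

lemma root_iff_mult_exp:
  fixes a \<tau> :: real and w z :: complex
  assumes "\<tau> \<noteq> 0"
  shows "z + of_real a - w * exp (- of_real \<tau> * z) = 0 \<longleftrightarrow>
    (of_real \<tau> * (z + of_real a)) * exp (of_real \<tau> * (z + of_real a)) = of_real (\<tau> * exp (\<tau> * a)) * w"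
proof -
  define E A where "E = exp (of_real \<tau> * z)" and "A = exp (of_real (\<tau> * a) :: complex)"
  have "E \<noteq> 0" "A \<noteq> 0"
    by (simp_all add: E_def A_def)
  have "exp (of_real \<tau> * (z + of_real a)) = E * A" and "exp (- of_real \<tau> * z) = inverse E"
    by (simp_all add: E_def A_def distrib_left exp_add exp_minus)
  moreover have "of_real (\<tau> * exp (\<tau> * a)) = of_real \<tau> * A"
    by (simp add: A_def flip: exp_of_real)
  moreover have "of_real \<tau> * E * A * (z + of_real a - w * inverse E) =
      of_real \<tau> * (z + of_real a) * (E * A) - of_real \<tau> * A * w"
    using \<open>E \<noteq> 0\<close> by (simp add: field_simps)
  ultimately show ?thesis
    using \<open>E \<noteq> 0\<close> \<open>A \<noteq> 0\<close> assms by (auto simp: mult.assoc)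
qed

lemma unstable_root_cnj_iff:
  fixes a \<tau> :: real and w :: complex
  shows "(\<exists>z. z + of_real a - cnj w * exp (- of_real \<tau> * z) = 0 \<and> 0 \<le> Re z) \<longleftrightarrow>
    (\<exists>z. z + of_real a - w * exp (- of_real \<tau> * z) = 0 \<and> 0 \<le> Re z)"
proof -
  have "cnj (z + of_real a - w * exp (- of_real \<tau> * z)) = cnj z + of_real a - cnj w * exp (- of_real \<tau> * cnj z)" for z
    by (simp add: exp_cnj)
  then have "z + of_real a - w * exp (- of_real \<tau> * z) = 0 \<longleftrightarrow>
      cnj z + of_real a - cnj w * exp (- of_real \<tau> * cnj z) = 0" for z
    by (metis complex_cnj_zero_iff)
  then show ?thesis
    by (metis complex_cnj_cnj cnj.sel(1))
qed

lemma unstable_root_iff_mult_exp: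
  fixes a \<tau> :: real and w :: complex
  assumes "0 < \<tau>"
  shows "(\<exists>z. z + of_real a - w * exp (- of_real \<tau> * z) = 0 \<and> 0 \<le> Re z) \<longleftrightarrow>
    (\<exists>u. u * exp u = of_real (\<tau> * cmod w * exp (\<tau> * a)) * cis (Arg w) \<and> \<tau> * a \<le> Re u)"
proof -
  have w: "of_real (\<tau> * exp (\<tau> * a)) * w = of_real (\<tau> * cmod w * exp (\<tau> * a)) * cis (Arg w)"
    using rcis_cmod_Arg[of w] by (simp add: rcis_def)
  have "z + of_real a - w * exp (- of_real \<tau> * z) = 0 \<longleftrightarrow>
      (of_real \<tau> * (z + of_real a)) * exp (of_real \<tau> * (z + of_real a)) =
        of_real (\<tau> * cmod w * exp (\<tau> * a)) * cis (Arg w)" for z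
    using root_iff_mult_exp[of \<tau> z a w] assms unfolding w by simp
  moreover have "0 \<le> Re z \<longleftrightarrow> \<tau> * a \<le> Re (of_real \<tau> * (z + of_real a))" for z
    using assms by (simp add: algebra_simps zero_le_mult_iff)
  moreover have "u = of_real \<tau> * ((u / of_real \<tau> - of_real a) + of_real a)" for u :: complex
    using assms by simp
  ultimately show ?thesis
    by metis
qed

context obtuse_angle
begin

lemma stability_conditions_iff:
  fixes a \<tau> \<rho> :: real
  assumes "0 < \<tau>"
  defines "r \<equiv> - \<tau> * a" and "L \<equiv> \<tau> * \<rho> * exp (\<tau> * a)"
  shows "(r \<le> 0 \<and> L < branch_modulus \<phi> (C2inv r \<phi>) \<or>
          0 < r \<and> r < Mfun \<phi> \<and> branch_modulus \<phi> (C1inv r \<phi>) < L \<and> L < branch_modulus \<phi> (C2inv r \<phi>))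
    \<longleftrightarrow> (0 \<le> a \<and> \<rho> < R2 r \<phi> / \<tau> \<or>
         - Mfun \<phi> / \<tau> < a \<and> a < 0 \<and> R1 r \<phi> / \<tau> < \<rho> \<and> \<rho> < R2 r \<phi> / \<tau>)"
proof -
  have L: "L < X * exp (- r) \<longleftrightarrow> \<rho> < X / \<tau>" "X * exp (- r) < L \<longleftrightarrow> X / \<tau> < \<rho>" for X
    using assms(1) by (simp_all add: L_def r_def field_simps)
  have "r \<le> 0 \<longleftrightarrow> 0 \<le> a" "0 < r \<and> r < Mfun \<phi> \<longleftrightarrow> - Mfun \<phi> / \<tau> < a \<and> a < 0"
    using assms(1) by (auto simp: r_def field_simps mult_less_0_iff zero_le_mult_iff)
  then show ?thesis
    using L branch_modulus_C1inv[of r] branch_modulus_C2inv[of r] Mfun_pos by auto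
qed

lemma unstable_root_exists_iff:
  fixes a \<tau> :: real and w :: complex
  assumes "Arg w = \<phi>" "0 < \<tau>"
  shows "(\<exists>z. z + of_real a - w * exp (- of_real \<tau> * z) = 0 \<and> 0 \<le> Re z) \<longleftrightarrow>
    \<not> (0 \<le> a \<and> cmod w < R2 (- \<tau> * a) \<phi> / \<tau> \<or>
       - Mfun \<phi> / \<tau> < a \<and> a < 0 \<and> R1 (- \<tau> * a) \<phi> / \<tau> < cmod w \<and> cmod w < R2 (- \<tau> * a) \<phi> / \<tau>)"
proof -
  define L where "L = \<tau> * cmod w * exp (\<tau> * a)"
  have "w \<noteq> 0"
    using assms(1) gt_0 by (auto simp: Arg_zero)
  then have "0 < L"
    using assms(2) by (simp add: L_def)
  have "(\<exists>z. z + of_real a - w * exp (- of_real \<tau> * z) = 0 \<and> 0 \<le> Re z) \<longleftrightarrow>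
      (\<exists>u. u * exp u = of_real L * cis \<phi> \<and> \<tau> * a \<le> Re u)"
    using unstable_root_iff_mult_exp[OF assms(2)] assms(1) by (simp add: L_def)
  also have "\<dots> \<longleftrightarrow> (\<exists>y\<in>{0<..<\<phi>}. Cfun y \<phi> \<le> - \<tau> * a \<and> branch_modulus \<phi> y = L)"
    using solution_Re_ge_exists_iff[OF \<open>0 < L\<close>, of "\<tau> * a"] by simp
  also have "\<dots> \<longleftrightarrow> \<not> (0 \<le> a \<and> cmod w < R2 (- \<tau> * a) \<phi> / \<tau> \<or>
       - Mfun \<phi> / \<tau> < a \<and> a < 0 \<and> R1 (- \<tau> * a) \<phi> / \<tau> < cmod w \<and> cmod w < R2 (- \<tau> * a) \<phi> / \<tau>)"
    using branch_point_exists_iff[OF \<open>0 < L\<close>, of "- \<tau> * a"] stability_conditions_iff[OF assms(2), of a "cmod w"]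
    unfolding L_def by blast
  finally show ?thesis .
qed

end

theorem mainTheorem16:
  fixes a \<tau> :: real and w :: complex
  assumes "w \<notin> \<real>"
    and "pi / 2 < \<bar>Arg w\<bar>" and "\<bar>Arg w\<bar> < pi"
    and "\<tau> > 0"
  shows "(\<forall>z::complex. z + complex_of_real a - w * exp (- (complex_of_real \<tau>) * z) = 0 \<longrightarrow> Re z < 0)
    \<longleftrightarrow>
    ((a \<ge> 0 \<and> cmod w < R2 (- \<tau> * a) \<bar>Arg w\<bar> / \<tau>)
     \<or> (- Mfun \<bar>Arg w\<bar> / \<tau> < a \<and> a < 0 \<and>
         R1 (- \<tau> * a) \<bar>Arg w\<bar> / \<tau> < cmod w \<and> cmod w < R2 (- \<tau> * a) \<bar>Arg w\<bar> / \<tau>))"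
proof -
  interpret obtuse_angle "\<bar>Arg w\<bar>"
    using assms(2,3) by unfold_locales
  define w' where "w' = (if 0 < Arg w then w else cnj w)"
  have "Arg w' = \<bar>Arg w\<bar>" "cmod w' = cmod w"
    using assms(1) by (auto simp: w'_def Arg_cnj)
  have "(\<forall>z. z + of_real a - w * exp (- of_real \<tau> * z) = 0 \<longrightarrow> Re z < 0) \<longleftrightarrow>
      \<not> (\<exists>z. z + of_real a - w' * exp (- of_real \<tau> * z) = 0 \<and> 0 \<le> Re z)"
    using unstable_root_cnj_iff[of a w \<tau>] by (auto simp: w'_def not_less)
  also have "\<dots> \<longleftrightarrow> (a \<ge> 0 \<and> cmod w < R2 (- \<tau> * a) \<bar>Arg w\<bar> / \<tau>)
     \<or> (- Mfun \<bar>Arg w\<bar> / \<tau> < a \<and> a < 0 \<and>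
         R1 (- \<tau> * a) \<bar>Arg w\<bar> / \<tau> < cmod w \<and> cmod w < R2 (- \<tau> * a) \<bar>Arg w\<bar> / \<tau>)"
    using unstable_root_exists_iff[OF \<open>Arg w' = \<bar>Arg w\<bar>\<close> assms(4), of a]
    unfolding \<open>cmod w' = cmod w\<close> by blast
  finally show ?thesis .
qed

end
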